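(* Let $B=\prod_{i=1}^d[\alpha_i,\beta_i]$ be an axis-parallel box in $\mathbb{R}^d$, let $\lambda$ be a vertex of $B$, and let $B',B''$ be axis-parallel boxes in $\mathbb{R}^d$ with $\lambda\in B'$ and $\lambda\notin B''$. Then there exists a face $F$ of $B$ with $F\cap B''=\emptyset$ and $F\cap B'\neq\emptyset$.
   Context: For a box $B=[\alpha_1,\beta_1]\times\dots\times[\alpha_d,\beta_d]$: a vertex is a point $(\lambda_1,\dots,\lambda_d)$ with $\lambda_j\in\{\alpha_j,\beta_j\}$ for all $j$; a face of $B$ is a set of the form $B\cap\{x: x_j=\alpha_j\}$ or $B\cap\{x:x_j=\beta_j\}$ for some $j\in[d]$. *)

theory Defs
  imports "HOL-Analysis.Analysis"
begin

text \<open>Axis-parallel boxes in R^d are represented as cbox a b for a b :: real^'n,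
  i.e. the product of the intervals [a$i, b$i].\<close>

definition box_vertex :: "real^'n \<Rightarrow> real^'n \<Rightarrow> real^'n \<Rightarrow> bool" where
  "box_vertex a b v \<longleftrightarrow> (\<forall>j. v$j = a$j \<or> v$j = b$j)"

definition box_faces :: "real^'n \<Rightarrow> real^'n \<Rightarrow> (real^'n) set set" where
  "box_faces a b =
     {cbox a b \<inter> {x. x$j = a$j} | j. True} \<union> {cbox a b \<inter> {x. x$j = b$j} | j. True}"

end

theory Submission
  imports Defs
begin

lemma box_vertex_in_cbox:
  assumes "\<forall>i. a$i \<le> b$i" and "box_vertex a b v"
  shows "v \<in> cbox a b"
  using assms unfolding mem_box_cart box_vertex_def by (metis order.refl)

lemma box_vertex_hyperplane_in_box_faces:
  assumes "box_vertex a b v"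
  shows "cbox a b \<inter> {x. x$j = v$j} \<in> box_faces a b"
proof (cases "v$j = a$j")
  case True
  then show ?thesis unfolding box_faces_def by auto
next
  case False
  then have "v$j = b$j" using assms unfolding box_vertex_def by blast
  then show ?thesis unfolding box_faces_def by auto
qed

lemma hyperplane_disjoint_cbox:
  fixes a b :: "real^'n"
  assumes "c < a$j \<or> b$j < c"
  shows "S \<inter> {x. x$j = c} \<inter> cbox a b = {}"
proof -
  have "x \<notin> cbox a b" if "x$j = c" for x :: "real^'n"
    using assms that unfolding mem_box_cart by (metis not_le)
  then show ?thesis by blast
qed

theorem lemma4:
  fixes a b a' b' a'' b'' v :: "real^'n"
  assumes "\<forall>i. a$i \<le> b$i" and "\<forall>i. a'$i \<le> b'$i" and "\<forall>i. a''$i \<le> b''$i"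
    and "box_vertex a b v"
    and "v \<in> cbox a' b'" and "v \<notin> cbox a'' b''"
  shows "\<exists>F\<in>box_faces a b. F \<inter> cbox a'' b'' = {} \<and> F \<inter> cbox a' b' \<noteq> {}"
proof -
  \<comment> \<open>The face through v orthogonal to a coordinate in which v leaves B'' works.\<close>
  obtain j where j: "v$j < a''$j \<or> b''$j < v$j"
    using assms(6) by (auto simp: mem_box_cart not_le)
  define F where "F = cbox a b \<inter> {x. x$j = v$j}"
  have "F \<in> box_faces a b"
    unfolding F_def using assms(4) by (rule box_vertex_hyperplane_in_box_faces)
  moreover have "F \<inter> cbox a'' b'' = {}"
    unfolding F_def using j by (rule hyperplane_disjoint_cbox)
  moreover have "v \<in> F \<inter> cbox a' b'"
    using box_vertex_in_cbox[OF assms(1,4)] assms(5) unfolding F_def by auto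
  ultimately show ?thesis by blast
qed

end
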